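(* Let $f(z)=\sum_{k=0}^\infty a_kz^{n_k}$ be analytic in $\mathbb D$, where $\{n_k\}$ are positive integers with $n_{k+1}\ge\lambda n_k$ for all $k$ and some $\lambda>1$. If $\sum_{k=0}^\infty|a_k|^2(\log n_k)^3<\infty$, then $f\in BMOA_{\log}\cap H^\infty$.
   Context: $\mathbb D$ is the open unit disc, $dA=\frac1\pi dx\,dy$, $H^\infty$ is the space of bounded analytic functions on $\mathbb D$. For an arc $I\subset\partial\mathbb D$ of length $|I|$, $S(I)=\{re^{it}: e^{it}\in I,\ 1-\frac{|I|}{2\pi}\le r<1\}$. $BMOA_{\log}$ is the space of $g\in H^1$ for which there is $C>0$ with $\int_{S(I)}(1-|z|^2)|g'(z)|^2\,dA(z)\le C|I|\left(\log\frac{2}{|I|}\right)^{-2}$ for every arc $I$. *)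

theory Defs
  imports "HOL-Analysis.Analysis"
begin

abbreviation unit_disc :: "complex set" where
  "unit_disc \<equiv> ball 0 1"

definition Hinf :: "(complex \<Rightarrow> complex) set" where
  "Hinf = {f. f holomorphic_on unit_disc \<and> bounded (f ` unit_disc)}"

definition circle_mean :: "(complex \<Rightarrow> complex) \<Rightarrow> real \<Rightarrow> real" where
  "circle_mean f r = (1 / (2 * pi)) * integral {0..2*pi} (\<lambda>t. norm (f (of_real r * cis t)))"

definition H1 :: "(complex \<Rightarrow> complex) set" where
  "H1 = {f. f holomorphic_on unit_disc \<and> bdd_above (circle_mean f ` {0..<1})}"

text \<open>Carleson box S(I) over the arc I = {e^{it} : theta \<le> t \<le> theta + l}, |I| = l, 0 < l \<le> 2 pi.\<close>
definition carleson_box :: "real \<Rightarrow> real \<Rightarrow> complex set" where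
  "carleson_box theta l =
     {of_real r * cis t | r t. theta \<le> t \<and> t \<le> theta + l \<and> 1 - l / (2 * pi) \<le> r \<and> r < 1}"

text \<open>BMOA_log. dA = (1/pi) dx dy. When |I| = 2 the right-hand side
  |I| (log(2/|I|))^(-2) is +infinity, so the condition is vacuous there.\<close>
definition BMOA_log :: "(complex \<Rightarrow> complex) set" where
  "BMOA_log = {g. g \<in> H1 \<and>
     (\<exists>C>0. \<forall>theta l. 0 < l \<and> l \<le> 2 * pi \<and> l \<noteq> 2 \<longrightarrow>
        (\<integral>\<^sup>+ z \<in> carleson_box theta l.
            ennreal ((1 - (cmod z)\<^sup>2) * (cmod (deriv g z))\<^sup>2 / pi) \<partial>lborel)
        \<le> ennreal (C * l / (ln (2 / l))\<^sup>2))}"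

end

theory Submission
  imports Defs
begin

text \<open>
  Lacunarity \<open>n(k+1) \<ge> \<lambda> n(k)\<close> makes \<open>\<Sum>\<^sub>k n(k) r^(n(k) - 1) \<le> c / (1 - r)\<close> with
  \<open>c = \<lambda> / (\<lambda> - 1)\<close>: each term is dominated by \<open>c\<close> times a block of the geometric series.
  As \<open>ln n(k) \<ge> k ln \<lambda>\<close>, the weights \<open>(ln n(k))^3\<close> force \<open>\<Sum> |a k| < \<infinity>\<close>, so \<open>f\<close> is bounded.

  For an arc of length \<open>l\<close> let \<open>h = l / 2\<pi>\<close>. Split \<open>f'\<close> at frequency \<open>h^(-1/2)\<close>; the low
  part is at most \<open>\<Sum> |a k| / \<surd>h\<close>, and Cauchy--Schwarz against the lacunary sum bounds the
  high part, so on the Carleson box \<open>(1 - |z|^2) |f' z|^2\<close> is at most a constant plus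
  \<open>4c \<Sum> |a k|^2 n(k) |z|^(n(k) - 1)\<close> over the high frequencies. Near the arc the box is
  covered by \<open>O(l / s)\<close> discs of radius \<open>2s\<close>, whence \<open>m |z|^(m - 1)\<close> integrates to \<open>O(l)\<close>
  over the box uniformly in \<open>m\<close>. The box integral is therefore \<open>O(l (h + \<Sum> |a k|^2))\<close>, the
  sum over \<open>n(k)^2 > 1/h\<close>; there \<open>ln (1/h) < 2 ln n(k)\<close>, so it is \<open>O(l / ln (2/l)^2)\<close>.
\<close>

lemma norm_cis_minus_one_le: "cmod (cis t - 1) \<le> \<bar>t\<bar>"
proof -
  have "(cmod (cis t - 1))\<^sup>2 = 2 - 2 * cos t"
    using sin_cos_squared_add[of t] by (simp add: cmod_def power2_eq_square algebra_simps)
  also have "\<dots> = (2 * sin (t/2))\<^sup>2"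
    using cos_double_sin[of "t/2"] by (simp add: power2_eq_square)
  also have "\<dots> \<le> t\<^sup>2"
  proof -
    have "\<bar>2 * sin (t/2)\<bar> \<le> \<bar>t\<bar>" using abs_sin_x_le_abs_x[of "t/2"] by simp
    then show ?thesis by (simp only: abs_le_square_iff)
  qed
  finally have "\<bar>cmod (cis t - 1)\<bar> \<le> \<bar>t\<bar>" by (simp only: abs_le_square_iff)
  then show ?thesis by simp
qed

lemma norm_cis_diff_le: "cmod (cis s - cis t) \<le> \<bar>s - t\<bar>"
proof -
  have "cis s - cis t = cis t * (cis (s - t) - 1)" by (simp add: right_diff_distrib cis_mult)
  then show ?thesis using norm_cis_minus_one_le[of "s - t"] by (simp add: norm_mult)
qed

lemma Cauchy_Schwarz_suminf:
  fixes p q :: "nat \<Rightarrow> real"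
  assumes p: "\<And>k. 0 \<le> p k" "summable p" and q: "\<And>k. 0 \<le> q k" "summable q"
  shows "summable (\<lambda>k. sqrt (p k) * sqrt (q k))"
    and "(\<Sum>k. sqrt (p k) * sqrt (q k))\<^sup>2 \<le> suminf p * suminf q"
proof -
  have "sqrt (p k) * sqrt (q k) \<le> (p k + q k) / 2" for k
    using arith_geo_mean_sqrt[OF p(1) q(1), of k] by (simp add: real_sqrt_mult)
  then show sw: "summable (\<lambda>k. sqrt (p k) * sqrt (q k))"
    by (intro summable_comparison_test[OF _ summable_divide[OF summable_add[OF p(2) q(2)], of 2]])
      (use p q in auto)
  have "(\<Sum>k<N. sqrt (p k) * sqrt (q k))\<^sup>2 \<le> suminf p * suminf q" for N
  proof -
    have "(\<Sum>k<N. sqrt (p k) * sqrt (q k))\<^sup>2 \<le> (\<Sum>k<N. (sqrt (p k))\<^sup>2) * (\<Sum>k<N. (sqrt (q k))\<^sup>2)"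
      by (rule Cauchy_Schwarz_ineq_sum)
    also have "\<dots> = (\<Sum>k<N. p k) * (\<Sum>k<N. q k)" using p q by simp
    also have "\<dots> \<le> suminf p * suminf q"
      using p q by (intro mult_mono sum_le_suminf) (auto simp: sum_nonneg suminf_nonneg)
    finally show ?thesis .
  qed
  moreover have "(\<lambda>N. (\<Sum>k<N. sqrt (p k) * sqrt (q k))\<^sup>2) \<longlonglongrightarrow> (\<Sum>k. sqrt (p k) * sqrt (q k))\<^sup>2"
    using summable_LIMSEQ[OF sw] by (intro tendsto_intros)
  ultimately show "(\<Sum>k. sqrt (p k) * sqrt (q k))\<^sup>2 \<le> suminf p * suminf q"
    by (intro LIMSEQ_le_const2) auto
qed

lemma one_plus_two_mult_squared_le:
  fixes y :: real assumes "0 \<le> y" shows "(1 + 2 * y)\<^sup>2 \<le> 9 * (1 + y ^ 3)"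
proof -
  have "y ^ 1 \<le> 1 + y ^ 3" "y ^ 2 \<le> 1 + y ^ 3"
  proof (atomize (full), cases "y \<le> 1")
    case True
    then show "y ^ 1 \<le> 1 + y ^ 3 \<and> y ^ 2 \<le> 1 + y ^ 3"
      using assms by (auto simp: power_le_one intro: add_increasing2)
  next
    case False
    then have "y ^ 1 \<le> y ^ 3" "y ^ 2 \<le> y ^ 3" by (intro power_increasing; simp)+
    then show "y ^ 1 \<le> 1 + y ^ 3 \<and> y ^ 2 \<le> 1 + y ^ 3" by simp
  qed
  moreover have "0 \<le> y ^ 3" using assms by simp
  moreover have "(1 + 2 * y)\<^sup>2 = 1 + 4 * y ^ 1 + 4 * y ^ 2" by (simp add: power2_eq_square algebra_simps)
  ultimately show ?thesis by argo
qed

lemma one_plus_squared_le_exp: "0 \<le> (u::real) \<Longrightarrow> (1 + u)\<^sup>2 \<le> 4 * exp u"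
proof -
  assume "0 \<le> u"
  then have "(1 + u)\<^sup>2 \<le> (2 * exp (u / 2))\<^sup>2"
    using exp_ge_add_one_self[of "u / 2"] by (intro power_mono) linarith+
  also have "\<dots> = 4 * exp u" by (simp add: power2_eq_square exp_add[symmetric])
  finally show ?thesis .
qed

lemma ln_pi_le_2: "ln pi \<le> 2"
proof -
  have "2 \<le> exp (1::real)" using exp_ge_add_one_self[of 1] by simp
  then have "pi \<le> exp 1 * exp (1::real)"
    using pi_less_4 mult_mono[of 2 "exp 1" 2 "exp (1::real)"] by simp
  then have "pi \<le> exp 2" by (simp add: exp_add[symmetric])
  then show ?thesis using pi_gt_zero by (metis exp_gt_zero ln_exp ln_le_cancel_iff)
qed

lemma mult_one_minus_ln_squared_le:
  fixes h :: real
  assumes "0 < h" "h \<le> 1"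
  shows "h * (1 - ln h)\<^sup>2 \<le> 4"
proof -
  have "h * (1 - ln h)\<^sup>2 \<le> h * (4 * exp (- ln h))"
    using one_plus_squared_le_exp[of "- ln h"] assms by (intro mult_left_mono) auto
  also have "\<dots> = 4" using assms by (simp add: exp_minus)
  finally show ?thesis .
qed

lemma ln_two_div_squared_le:
  assumes "0 < l" "l \<le> 2 * pi"
  shows "(ln (2 / l))\<^sup>2 \<le> 4 * (1 - ln (l / (2 * pi)))\<^sup>2"
proof -
  define u where "u = - ln (l / (2 * pi))"
  have u: "0 \<le> u" using assms by (simp add: u_def)
  have "ln (2 / l) = u - ln pi"
    using assms by (simp add: u_def ln_div ln_mult)
  moreover have "0 \<le> ln pi" using pi_gt3 by simp
  ultimately have "\<bar>ln (2 / l)\<bar> \<le> 2 * (1 + u)" using u ln_pi_le_2 by (simp only: abs_le_iff) argo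
  then have "\<bar>ln (2 / l)\<bar>\<^sup>2 \<le> (2 * (1 + u))\<^sup>2" by (rule power_mono) simp
  then show ?thesis by (simp add: u_def power2_eq_square algebra_simps)
qed

section \<open>Hadamard gap sequences\<close>

lemma power_block_sum_ge:
  assumes "i \<le> j" "0 \<le> r" "r \<le> (1::real)"
  shows "real (j - i) * r ^ (j - 1) \<le> (\<Sum>m\<in>{i..<j}. r ^ m)"
proof -
  have "r ^ (j - 1) \<le> r ^ m" if "m \<in> {i..<j}" for m
    using that assms by (intro power_decreasing) auto
  then show ?thesis using sum_bounded_below[of "{i..<j}" "r ^ (j - 1)" "\<lambda>m. r ^ m"] by simp
qed

locale hadamard_gap =
  fixes n :: "nat \<Rightarrow> nat" and lam :: real
  assumes n_pos: "\<And>k. n k > 0"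
    and gap_ratio_gt_1: "lam > 1"
    and gap: "\<And>k. real (n (Suc k)) \<ge> lam * real (n k)"
begin

definition gap_const :: real where "gap_const = lam / (lam - 1)"

lemma gap_const_ge_1: "gap_const \<ge> 1"
  using gap_ratio_gt_1 by (simp add: gap_const_def field_simps)

lemma n_less_Suc: "n k < n (Suc k)"
proof -
  have "real (n k) < lam * real (n k)" using n_pos[of k] gap_ratio_gt_1 by simp
  also have "\<dots> \<le> real (n (Suc k))" by (rule gap)
  finally show ?thesis by simp
qed

lemma n_Suc_le_gap_const_mult_diff: "real (n (Suc k)) \<le> gap_const * (real (n (Suc k)) - real (n k))"
proof -
  have "real (n k) \<le> real (n (Suc k)) / lam" using gap[of k] gap_ratio_gt_1 by (simp add: field_simps)
  then show ?thesis using gap_ratio_gt_1 by (simp add: gap_const_def field_simps)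
qed

lemma gap_ratio_power_le: "lam ^ k \<le> real (n k)"
proof (induction k)
  case 0
  then show ?case using n_pos[of 0] by simp
next
  case (Suc k)
  then have "lam ^ Suc k \<le> lam * real (n k)" using gap_ratio_gt_1 by simp
  also have "\<dots> \<le> real (n (Suc k))" by (rule gap)
  finally show ?case .
qed

lemma ln_n_ge: "real k * ln lam \<le> ln (real (n k))"
proof -
  have "ln (lam ^ k) \<le> ln (real (n k))"
    using gap_ratio_power_le[of k] gap_ratio_gt_1 n_pos[of k] by (subst ln_le_cancel_iff) auto
  then show ?thesis using gap_ratio_gt_1 by (simp add: ln_realpow)
qed

lemma ln_n_nonneg: "0 \<le> ln (real (n k))"
  using n_pos[of k] by simp

text \<open>Each term \<open>n(k) r^(n(k) - 1)\<close> is at most \<open>gap_const\<close> times the sum of \<open>r^m\<close>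
  over the block \<open>n(k - 1) \<le> m < n(k)\<close>, whose length is at least \<open>n(k) / gap_const\<close>.\<close>
lemma lacunary_power_partial_sum_le:
  assumes "0 \<le> r" "r \<le> (1::real)"
  shows "(\<Sum>k<Suc K. real (n k) * r ^ (n k - 1)) \<le> gap_const * (\<Sum>m<n K. r ^ m)"
proof (induction K)
  case 0
  have "real (n 0) * r ^ (n 0 - 1) \<le> (\<Sum>m<n 0. r ^ m)"
    using power_block_sum_ge[of 0 "n 0" r] assms by (simp add: atLeast0LessThan)
  also have "\<dots> \<le> gap_const * (\<Sum>m<n 0. r ^ m)"
    using assms gap_const_ge_1 mult_right_mono[of 1 gap_const "\<Sum>m<n 0. r ^ m"]
    by (simp add: sum_nonneg)
  finally show ?case by simp
next
  case (Suc K)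
  have le: "n K \<le> n (Suc K)" using n_less_Suc[of K] by simp
  have "real (n (Suc K)) * r ^ (n (Suc K) - 1)
      \<le> gap_const * (real (n (Suc K) - n K) * r ^ (n (Suc K) - 1))"
    using mult_right_mono[OF n_Suc_le_gap_const_mult_diff[of K], of "r ^ (n (Suc K) - 1)"] assms le
    by (simp add: of_nat_diff mult.assoc)
  also have "\<dots> \<le> gap_const * (\<Sum>m\<in>{n K..<n (Suc K)}. r ^ m)"
    using power_block_sum_ge[OF le assms] gap_const_ge_1 by (intro mult_left_mono) auto
  finally have "real (n (Suc K)) * r ^ (n (Suc K) - 1) \<le> gap_const * (\<Sum>m\<in>{n K..<n (Suc K)}. r ^ m)" .
  moreover have "(\<Sum>m<n (Suc K). r ^ m) = (\<Sum>m<n K. r ^ m) + (\<Sum>m\<in>{n K..<n (Suc K)}. r ^ m)"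
    using le by (metis atLeast0LessThan sum.atLeastLessThan_concat zero_le)
  ultimately show ?case using Suc by (simp add: distrib_left)
qed

lemma lacunary_power_sum:
  assumes "0 \<le> r" "r < (1::real)"
  shows "summable (\<lambda>k. real (n k) * r ^ (n k - 1))"
    and "(\<Sum>k. real (n k) * r ^ (n k - 1)) \<le> gap_const / (1 - r)"
proof -
  have partial: "(\<Sum>k<K. real (n k) * r ^ (n k - 1)) \<le> gap_const / (1 - r)" for K
  proof (cases K)
    case 0
    then show ?thesis using assms gap_const_ge_1 by simp
  next
    case (Suc K')
    have "(\<Sum>k<K. real (n k) * r ^ (n k - 1)) \<le> gap_const * (\<Sum>m<n K'. r ^ m)"
      using lacunary_power_partial_sum_le[of r K'] assms Suc by simp
    also have "(\<Sum>m<n K'. r ^ m) \<le> 1 / (1 - r)"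
      using assms by (simp add: sum_gp_strict divide_right_mono)
    finally show ?thesis using gap_const_ge_1 assms by (simp add: divide_right_mono mult_left_mono)
  qed
  show "summable (\<lambda>k. real (n k) * r ^ (n k - 1))"
    by (rule summableI_nonneg_bounded[OF _ partial]) (use assms in auto)
  then show "(\<Sum>k. real (n k) * r ^ (n k - 1)) \<le> gap_const / (1 - r)"
    using partial by (rule suminf_le_const)
qed

end

section \<open>Carleson boxes\<close>

definition arc_neighbourhood :: "real \<Rightarrow> real \<Rightarrow> real \<Rightarrow> complex set" where
  "arc_neighbourhood \<theta> l s = (\<Union>j\<in>{0..nat \<lfloor>l / s\<rfloor>}. ball (cis (\<theta> + real j * s)) (2 * s))"

lemma open_arc_neighbourhood: "open (arc_neighbourhood \<theta> l s)"
  unfolding arc_neighbourhood_def by auto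

lemma carleson_box_polar:
  assumes "z \<in> carleson_box \<theta> l" "l \<le> 2 * pi"
  obtains t where "\<theta> \<le> t" "t \<le> \<theta> + l" "z = of_real (cmod z) * cis t"
    and "1 - l / (2 * pi) \<le> cmod z" "cmod z < 1"
proof -
  from assms obtain r t where z: "z = of_real r * cis t" and t: "\<theta> \<le> t" "t \<le> \<theta> + l"
    and r: "1 - l / (2 * pi) \<le> r" "r < 1"
    unfolding carleson_box_def by auto
  have "l / (2 * pi) \<le> 1" using assms(2) by (simp add: divide_le_eq)
  then have "0 \<le> r" using r by linarith
  then have "cmod z = r" using z by (simp add: norm_mult)
  then show ?thesis using that t z r by simp
qed

lemma carleson_box_subset_arc_neighbourhood:
  assumes "0 < s" "l \<le> 2 * pi"
  shows "{z \<in> carleson_box \<theta> l. 1 - s \<le> cmod z} \<subseteq> arc_neighbourhood \<theta> l s"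
proof
  fix z assume "z \<in> {z \<in> carleson_box \<theta> l. 1 - s \<le> cmod z}"
  then have z: "z \<in> carleson_box \<theta> l" and zs: "1 - s \<le> cmod z" by auto
  obtain t where t: "\<theta> \<le> t" "t \<le> \<theta> + l" and zt: "z = of_real (cmod z) * cis t"
    and z1: "cmod z < 1"
    using carleson_box_polar[OF z assms(2)] by blast
  define j where "j = nat \<lfloor>(t - \<theta>) / s\<rfloor>"
  have "0 \<le> (t - \<theta>) / s" using t assms by simp
  then have j: "real j \<le> (t - \<theta>) / s" "(t - \<theta>) / s < real j + 1"
    unfolding j_def by linarith+
  have "j \<le> nat \<lfloor>l / s\<rfloor>" unfolding j_def
    using t assms by (intro nat_mono floor_mono divide_right_mono) auto
  define tj where "tj = \<theta> + real j * s"
  have "\<bar>t - tj\<bar> < s" using j assms by (simp add: tj_def field_simps)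
  have "cmod (z - cis t) = 1 - cmod z"
  proof -
    have "z - cis t = of_real (cmod z - 1) * cis t" by (subst zt) (simp add: algebra_simps)
    then show ?thesis using z1 by (simp only: norm_mult norm_of_real norm_cis) simp
  qed
  then have "cmod (z - cis tj) < 2 * s"
    using norm_triangle_ineq[of "z - cis t" "cis t - cis tj"] norm_cis_diff_le[of t tj]
      \<open>\<bar>t - tj\<bar> < s\<close> zs by simp
  then show "z \<in> arc_neighbourhood \<theta> l s"
    unfolding arc_neighbourhood_def tj_def using \<open>j \<le> nat \<lfloor>l / s\<rfloor>\<close>
    by (auto simp: dist_norm norm_minus_commute)
qed

lemma emeasure_arc_neighbourhood_le:
  assumes "0 < s" "s \<le> l"
  shows "emeasure lborel (arc_neighbourhood \<theta> l s) \<le> ennreal (8 * pi * l * s)"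
proof -
  let ?J = "{0..nat \<lfloor>l / s\<rfloor>}"
  have "emeasure lborel (arc_neighbourhood \<theta> l s)
      \<le> (\<Sum>j\<in>?J. emeasure lborel (ball (cis (\<theta> + real j * s)) (2 * s)))"
    unfolding arc_neighbourhood_def by (rule emeasure_subadditive_finite) auto
  also have "\<dots> = ennreal (real (card ?J) * (pi * (2 * s)\<^sup>2))"
    using assms by (simp add: emeasure_ball unit_ball_vol_2 ennreal_of_nat_eq_real_of_nat ennreal_mult)
  also have "\<dots> \<le> ennreal (8 * pi * l * s)"
  proof (rule ennreal_leI)
    have "real (card ?J) \<le> l / s + 1" using assms by (simp add: of_nat_nat)
    also have "\<dots> \<le> 2 * l / s" using assms by (simp add: field_simps)
    finally have "real (card ?J) * (pi * (2 * s)\<^sup>2) \<le> 2 * l / s * (pi * (2 * s)\<^sup>2)"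
      by (rule mult_right_mono) simp
    also have "\<dots> = 8 * pi * l * s" using assms by (simp add: power2_eq_square field_simps)
    finally show "real (card ?J) * (pi * (2 * s)\<^sup>2) \<le> 8 * pi * l * s" .
  qed
  finally show ?thesis .
qed

lemma ring_weight_sum_le:
  assumes "1 \<le> m"
  shows "(\<Sum>j\<le>m. real (j + 1) * (1 - real j / real m) ^ (m - 1)) \<le> 20"
proof (cases "m = 1")
  case True
  then show ?thesis by (simp add: atMost_Suc)
next
  case False
  with assms have m: "2 \<le> m" by simp
  define q where "q = exp (-1/4 :: real)"
  have "5/4 \<le> exp (1/4 :: real)" using exp_ge_add_one_self[of "1/4 :: real"] by simp
  then have q: "0 \<le> q" "q \<le> 4/5" unfolding q_def by (simp_all add: exp_minus field_simps)
  have term_le: "real (j + 1) * (1 - real j / real m) ^ (m - 1) \<le> 4 * q ^ j" if "j \<le> m" for j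
  proof -
    have nonneg: "0 \<le> 1 - real j / real m" using that m by (simp add: field_simps)
    have "(1 - real j / real m) ^ (m - 1) \<le> exp (- (real j / real m)) ^ (m - 1)"
      using exp_ge_add_one_self[of "- (real j / real m)"] nonneg by (intro power_mono) auto
    also have "\<dots> = exp (- (real j / real m) * real (m - 1))"
      by (simp add: exp_of_nat_mult[symmetric] mult.commute)
    also have "\<dots> \<le> exp (- real j / 2)"
    proof -
      have "real m \<le> 2 * real (m - 1)" using m by linarith
      then have "real j / 2 \<le> real j / real m * real (m - 1)"
        using m by (simp add: field_simps mult_left_mono)
      then show ?thesis by simp
    qed
    finally have "(1 - real j / real m) ^ (m - 1) \<le> exp (- real j / 2)" .
    moreover have "real (j + 1) \<le> 4 * exp (real j / 4)"
      using exp_ge_add_one_self[of "real j / 4"] by linarith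
    ultimately have "real (j + 1) * (1 - real j / real m) ^ (m - 1)
        \<le> 4 * exp (real j / 4) * exp (- real j / 2)"
      using nonneg by (intro mult_mono) auto
    also have "\<dots> = 4 * q ^ j"
      by (simp add: q_def exp_add[symmetric] exp_of_nat_mult[symmetric] mult.commute)
    finally show ?thesis .
  qed
  have "(\<Sum>j\<le>m. real (j + 1) * (1 - real j / real m) ^ (m - 1)) \<le> (\<Sum>j\<le>m. 4 * q ^ j)"
    by (rule sum_mono) (use term_le in auto)
  also have "\<dots> = 4 * (\<Sum>j<Suc m. q ^ j)" by (simp add: sum_distrib_left lessThan_Suc_atMost)
  also have "(\<Sum>j<Suc m. q ^ j) = (1 - q ^ Suc m) / (1 - q)"
    using q sum_gp_strict[of q "Suc m"] by simp
  also have "\<dots> \<le> 1 / (1 - q)"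
    using q by (intro divide_right_mono) auto
  also have "1 / (1 - q) \<le> 5" using q by (simp add: field_simps)
  finally show ?thesis by simp
qed

text \<open>Discretising the radius in steps of \<open>1/m\<close>: a point of modulus \<open>\<rho>\<close> lies in the
  annulus \<open>1 - (j + 1)/m \<le> \<rho> \<le> 1 - j/m\<close> for \<open>j = \<lfloor>m(1 - \<rho>)\<rfloor>\<close>.\<close>
lemma power_le_ring_sum:
  assumes "1 \<le> m" "0 \<le> \<rho>" "\<rho> \<le> 1"
  shows "real m * \<rho> ^ (m - 1)
    \<le> (\<Sum>j\<le>m. real m * (1 - real j / real m) ^ (m - 1) * of_bool (1 - real (j + 1) / real m \<le> \<rho>))"
proof -
  define j0 where "j0 = nat \<lfloor>real m * (1 - \<rho>)\<rfloor>"
  have m: "0 < real m" using assms by simp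
  have "0 \<le> real m * (1 - \<rho>)" using assms by simp
  then have j0: "real j0 \<le> real m * (1 - \<rho>)" "real m * (1 - \<rho>) < real j0 + 1"
    unfolding j0_def by linarith+
  have "real m * (1 - \<rho>) \<le> real m" using assms by (simp add: mult_left_le)
  then have "j0 \<le> m" using j0 by linarith
  have "\<rho> \<le> 1 - real j0 / real m" "1 - real (j0 + 1) / real m \<le> \<rho>"
    using j0 m by (simp_all add: field_simps)
  then have "real m * \<rho> ^ (m - 1)
      \<le> real m * (1 - real j0 / real m) ^ (m - 1) * of_bool (1 - real (j0 + 1) / real m \<le> \<rho>)"
    using assms by (simp add: power_mono)
  also have "\<dots> \<le> (\<Sum>j\<le>m. real m * (1 - real j / real m) ^ (m - 1) * of_bool (1 - real (j + 1) / real m \<le> \<rho>))"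
    using \<open>j0 \<le> m\<close> m
    by (intro member_le_sum[where i = j0]) (auto simp: field_simps)
  finally show ?thesis .
qed

text \<open>A measurable majorant of \<open>z \<mapsto> m |z|^(m - 1)\<close> on the Carleson box: the parts of
  the annuli of \<open>power_le_ring_sum\<close> lying in the box are covered by arc neighbourhoods.\<close>
definition power_majorant :: "real \<Rightarrow> real \<Rightarrow> nat \<Rightarrow> complex \<Rightarrow> ennreal" where
  "power_majorant \<theta> l m z = (\<Sum>j\<le>m. ennreal (real m * (1 - real j / real m) ^ (m - 1)) *
     indicator (arc_neighbourhood \<theta> l (min (real (j + 1) / real m) (l / (2 * pi)))) z)"

lemma power_majorant_measurable [measurable]: "power_majorant \<theta> l m \<in> borel_measurable lborel"
  unfolding power_majorant_def using open_arc_neighbourhood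
  by (intro borel_measurable_sum) (auto intro!: borel_measurable_indicator borel_open)

lemma power_le_power_majorant:
  assumes "1 \<le> m" "z \<in> carleson_box \<theta> l" "0 < l" "l \<le> 2 * pi"
  shows "ennreal (real m * cmod z ^ (m - 1)) \<le> power_majorant \<theta> l m z"
proof -
  obtain t where z: "1 - l / (2 * pi) \<le> cmod z" "cmod z < 1"
    using carleson_box_polar[OF assms(2,4)] .
  have m: "0 < real m" using assms by simp
  define e where "e j = real m * (1 - real j / real m) ^ (m - 1)" for j
  define V where "V j = arc_neighbourhood \<theta> l (min (real (j + 1) / real m) (l / (2 * pi)))" for j
  have e: "0 \<le> e j" if "j \<le> m" for j using that m by (simp add: e_def field_simps)
  have "of_bool (1 - real (j + 1) / real m \<le> cmod z) \<le> (indicator (V j) z :: real)" for j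
    using carleson_box_subset_arc_neighbourhood[of "min (real (j + 1) / real m) (l / (2 * pi))" l \<theta>]
      assms z m
    by (auto simp: V_def)
  then have "real m * cmod z ^ (m - 1) \<le> (\<Sum>j\<le>m. e j * indicator (V j) z)"
    using power_le_ring_sum[OF assms(1) norm_ge_zero less_imp_le[OF z(2)]] e
    unfolding e_def by (smt (verit) atMost_iff mult_left_mono sum_mono)
  then have "ennreal (real m * cmod z ^ (m - 1)) \<le> ennreal (\<Sum>j\<le>m. e j * indicator (V j) z)"
    by (rule ennreal_leI)
  also have "\<dots> = (\<Sum>j\<le>m. ennreal (e j * indicator (V j) z))"
    using e by (intro sum_ennreal[symmetric]) auto
  also have "\<dots> = power_majorant \<theta> l m z"
    unfolding power_majorant_def e_def[symmetric] V_def[symmetric]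
    using e by (intro sum.cong) (auto simp: ennreal_mult' ennreal_indicator)
  finally show ?thesis .
qed

lemma nn_integral_power_majorant_le:
  assumes "1 \<le> m" "0 < l" "l \<le> 2 * pi"
  shows "(\<integral>\<^sup>+ z. power_majorant \<theta> l m z \<partial>lborel) \<le> ennreal (160 * pi * l)"
proof -
  define s where "s j = min (real (j + 1) / real m) (l / (2 * pi))" for j
  define e where "e j = real m * (1 - real j / real m) ^ (m - 1)" for j
  have m: "0 < real m" using assms by simp
  have s: "0 < s j" "s j \<le> l" "s j \<le> real (j + 1) / real m" for j
    using assms m pi_gt3 by (auto simp: s_def field_simps min_le_iff_disj)
  have e: "0 \<le> e j" if "j \<le> m" for j using that m by (simp add: e_def field_simps)
  have "(\<integral>\<^sup>+ z. power_majorant \<theta> l m z \<partial>lborel)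
      = (\<Sum>j\<le>m. ennreal (e j) * emeasure lborel (arc_neighbourhood \<theta> l (s j)))"
    unfolding power_majorant_def e_def s_def using open_arc_neighbourhood
    by (subst nn_integral_sum) (auto intro!: borel_open nn_integral_cmult_indicator sum.cong)
  also have "\<dots> \<le> (\<Sum>j\<le>m. ennreal (e j * (8 * pi * l * s j)))"
    using s e by (intro sum_mono) (auto simp: ennreal_mult' intro!: mult_left_mono emeasure_arc_neighbourhood_le)
  also have "\<dots> = ennreal (\<Sum>j\<le>m. e j * (8 * pi * l * s j))"
    using less_imp_le[OF s(1)] e assms by (intro sum_ennreal) auto
  also have "\<dots> \<le> ennreal (160 * pi * l)"
  proof (rule ennreal_leI)
    have "e j * (8 * pi * l * s j) \<le> 8 * pi * l * (real (j + 1) * (1 - real j / real m) ^ (m - 1))"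
      if "j \<le> m" for j
    proof -
      have "e j * s j \<le> e j * (real (j + 1) / real m)" using e[OF that] s by (intro mult_left_mono)
      also have "\<dots> = real (j + 1) * (1 - real j / real m) ^ (m - 1)" using m by (simp add: e_def)
      finally show ?thesis using assms by (simp add: mult_left_mono mult.left_commute[of _ "8 * pi * l"])
    qed
    then have "(\<Sum>j\<le>m. e j * (8 * pi * l * s j))
        \<le> (\<Sum>j\<le>m. 8 * pi * l * (real (j + 1) * (1 - real j / real m) ^ (m - 1)))"
      by (intro sum_mono) simp
    also have "\<dots> = 8 * pi * l * (\<Sum>j\<le>m. real (j + 1) * (1 - real j / real m) ^ (m - 1))"
      by (simp add: sum_distrib_left)
    also have "\<dots> \<le> 8 * pi * l * 20" using ring_weight_sum_le[OF assms(1)] assms by (intro mult_left_mono) auto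
    finally show "(\<Sum>j\<le>m. e j * (8 * pi * l * s j)) \<le> 160 * pi * l" by simp
  qed
  finally show ?thesis .
qed

lemma nn_integral_majorant_sum_le:
  assumes "\<And>k. 1 \<le> m k" "0 < h" "h \<le> l" "l \<le> 2 * pi" "0 \<le> A" "\<And>k. 0 \<le> w k" "summable w"
  shows "(\<integral>\<^sup>+ z. ennreal A * indicator (arc_neighbourhood \<theta> l h) z
      + (\<Sum>k. ennreal (w k) * power_majorant \<theta> l (m k) z) \<partial>lborel)
    \<le> ennreal (A * (8 * pi * l * h) + (\<Sum>k. w k) * (160 * pi * l))"
proof -
  have "(\<integral>\<^sup>+ z. ennreal A * indicator (arc_neighbourhood \<theta> l h) z
      + (\<Sum>k. ennreal (w k) * power_majorant \<theta> l (m k) z) \<partial>lborel)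
      = ennreal A * emeasure lborel (arc_neighbourhood \<theta> l h)
        + (\<Sum>k. ennreal (w k) * (\<integral>\<^sup>+ z. power_majorant \<theta> l (m k) z \<partial>lborel))"
    using open_arc_neighbourhood
    by (subst nn_integral_add, simp_all add: borel_open nn_integral_suminf nn_integral_cmult
        nn_integral_cmult_indicator)
  also have "\<dots> \<le> ennreal A * ennreal (8 * pi * l * h) + (\<Sum>k. ennreal (w k) * ennreal (160 * pi * l))"
  proof (rule add_mono)
    show "ennreal A * emeasure lborel (arc_neighbourhood \<theta> l h) \<le> ennreal A * ennreal (8 * pi * l * h)"
      using emeasure_arc_neighbourhood_le[OF assms(2,3)] by (rule mult_left_mono) simp
    show "(\<Sum>k. ennreal (w k) * (\<integral>\<^sup>+ z. power_majorant \<theta> l (m k) z \<partial>lborel))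
        \<le> (\<Sum>k. ennreal (w k) * ennreal (160 * pi * l))"
      using nn_integral_power_majorant_le[OF assms(1) _ assms(4)] assms(2,3)
      by (intro suminf_le mult_left_mono summableI) auto
  qed
  also have "\<dots> = ennreal (A * (8 * pi * l * h)) + ennreal ((\<Sum>k. w k) * (160 * pi * l))"
    using assms summable_mult2[OF assms(7), of "160 * pi * l"]
    by (simp add: ennreal_mult'[symmetric] suminf_ennreal2 suminf_mult2)
  also have "\<dots> = ennreal (A * (8 * pi * l * h) + (\<Sum>k. w k) * (160 * pi * l))"
    using assms suminf_nonneg[OF assms(7,6)] by (intro ennreal_plus[symmetric]) auto
  finally show ?thesis .
qed

section \<open>Lacunary series\<close>

locale lacunary_series = hadamard_gap n lam for n :: "nat \<Rightarrow> nat" and lam :: real +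
  fixes a :: "nat \<Rightarrow> complex" and f :: "complex \<Rightarrow> complex"
  assumes f_holomorphic: "f holomorphic_on unit_disc"
    and f_sums: "\<And>z. z \<in> unit_disc \<Longrightarrow> (\<lambda>k. a k * z ^ n k) sums f z"
    and log_cube_summable: "summable (\<lambda>k. (cmod (a k))\<^sup>2 * (ln (real (n k))) ^ 3)"
begin

text \<open>\<open>|a k| \<le> (|a k|^2 t + 1/t) / 2\<close> with \<open>t = (k ln \<lambda>)^3 \<le> (ln n(k))^3\<close>, and
  \<open>\<Sum> 1/t < \<infinity>\<close>.\<close>
lemma summable_norm_coeff: "summable (\<lambda>k. cmod (a k))"
proof -
  define L where "L = ln lam"
  have L: "L > 0" using gap_ratio_gt_1 by (simp add: L_def)
  have "summable (\<lambda>k. ((cmod (a k))\<^sup>2 * (ln (real (n k))) ^ 3 + inverse (L ^ 3) * inverse (real k ^ 3)) / 2)"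
    using log_cube_summable inverse_power_summable[of 3, where 'a = real]
    by (intro summable_divide summable_add summable_mult) auto
  then show ?thesis
  proof (rule summable_comparison_test'[where N = 1])
    fix k :: nat assume k: "1 \<le> k"
    define t where "t = (real k * L) ^ 3"
    have t: "t > 0" using k L by (simp add: t_def)
    have "cmod (a k) \<le> ((cmod (a k))\<^sup>2 * t + 1 / t) / 2"
      using t sum_squares_ge_zero[of "cmod (a k) * t - 1" 0]
      by (simp add: field_simps power2_eq_square)
    also have "(cmod (a k))\<^sup>2 * t \<le> (cmod (a k))\<^sup>2 * (ln (real (n k))) ^ 3"
      unfolding t_def using ln_n_ge[of k] L k
      by (intro mult_left_mono power_mono) (auto simp: L_def)
    also have "1 / t = inverse (L ^ 3) * inverse (real k ^ 3)"
      by (simp add: t_def power_mult_distrib field_simps)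
    finally show "norm (cmod (a k))
        \<le> ((cmod (a k))\<^sup>2 * (ln (real (n k))) ^ 3 + inverse (L ^ 3) * inverse (real k ^ 3)) / 2"
      by simp
  qed
qed

definition coeff_norm_sum :: real where "coeff_norm_sum = (\<Sum>k. cmod (a k))"

lemma norm_coeff_le: "cmod (a k) \<le> coeff_norm_sum"
  unfolding coeff_norm_sum_def
  using sum_le_suminf[OF summable_norm_coeff, of "{k}"] by simp

lemma coeff_norm_sum_nonneg: "0 \<le> coeff_norm_sum"
  using norm_coeff_le[of 0] norm_ge_zero[of "a 0"] by linarith

lemma summable_norm_coeff_squared: "summable (\<lambda>k. (cmod (a k))\<^sup>2)"
  using norm_coeff_le
  by (intro summable_comparison_test[OF _ summable_mult[OF summable_norm_coeff, of coeff_norm_sum]])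
    (auto simp: power2_eq_square mult_right_mono)

lemma norm_f_le: "z \<in> unit_disc \<Longrightarrow> cmod (f z) \<le> coeff_norm_sum"
proof -
  assume z: "z \<in> unit_disc"
  have le: "norm (a k * z ^ n k) \<le> cmod (a k)" for k
    using z by (simp add: norm_mult norm_power mult_left_le power_le_one)
  have sn: "summable (\<lambda>k. norm (a k * z ^ n k))"
    using le by (intro summable_comparison_test[OF _ summable_norm_coeff]) auto
  have "cmod (f z) = norm (\<Sum>k. a k * z ^ n k)" using f_sums[OF z] by (simp add: sums_iff)
  also have "\<dots> \<le> (\<Sum>k. norm (a k * z ^ n k))" by (rule summable_norm[OF sn])
  also have "\<dots> \<le> coeff_norm_sum" unfolding coeff_norm_sum_def
    by (rule suminf_le[OF le sn summable_norm_coeff])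
  finally show ?thesis .
qed

lemma f_in_Hinf: "f \<in> Hinf"
  unfolding Hinf_def bounded_iff using f_holomorphic norm_f_le by blast

lemma f_in_H1: "f \<in> H1"
proof -
  have "circle_mean f r \<le> coeff_norm_sum" if "0 \<le> r" "r < 1" for r
  proof -
    have inD: "of_real r * cis t \<in> unit_disc" for t using that by (simp add: norm_mult)
    have "continuous_on {0..2*pi} (\<lambda>t. norm (f (of_real r * cis t)))"
      by (intro continuous_on_norm continuous_on_compose2[OF holomorphic_on_imp_continuous_on[OF f_holomorphic]])
        (use inD in \<open>auto intro!: continuous_intros\<close>)
    then have "integral {0..2*pi} (\<lambda>t. norm (f (of_real r * cis t))) \<le> integral {0..2*pi} (\<lambda>t. coeff_norm_sum)"
      by (rule integral_le[OF integrable_continuous_interval]) (use norm_f_le inD in auto)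
    then show ?thesis unfolding circle_mean_def by (simp add: field_simps)
  qed
  then show ?thesis unfolding H1_def using f_holomorphic by (auto intro!: bdd_aboveI2)
qed

lemma norm_deriv_f_le:
  assumes z: "z \<in> unit_disc"
  shows "cmod (deriv f z) \<le> (\<Sum>k. cmod (a k) * (real (n k) * cmod z ^ (n k - 1)))"
proof -
  define \<rho> where "\<rho> = (1 + cmod z) / 2"
  have \<rho>: "0 \<le> \<rho>" "\<rho> < 1" "cmod z < \<rho>" using z by (auto simp: \<rho>_def)
  define F' where "F' k w = a k * (of_nat (n k) * w ^ (n k - 1))" for k w
  have dF: "((\<lambda>w. a k * w ^ n k) has_field_derivative F' k w) (at w within cball 0 \<rho>)" for k w
    unfolding F'_def by (auto intro!: derivative_eq_intros)
  have norm_F': "norm (F' k w) = cmod (a k) * (real (n k) * cmod w ^ (n k - 1))" for k w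
    by (simp add: F'_def norm_mult norm_power)
  have bound: "norm (F' k w) \<le> coeff_norm_sum * (real (n k) * \<rho> ^ (n k - 1))" if "w \<in> cball 0 \<rho>" for k w
    unfolding norm_F' using that norm_coeff_le coeff_norm_sum_nonneg
    by (intro mult_mono mult_left_mono power_mono) auto
  have summable_bound: "summable (\<lambda>k. coeff_norm_sum * (real (n k) * \<rho> ^ (n k - 1)))"
    using lacunary_power_sum(1)[OF \<rho>(1,2)] by (rule summable_mult)
  have "((\<lambda>w. \<Sum>k. a k * w ^ n k) has_field_derivative (\<Sum>k. F' k z)) (at z)"
    using \<rho> f_sums[OF z]
    by (intro has_field_derivative_series'(2)[OF _ dF Weierstrass_m_test'[OF bound summable_bound]])
      (auto simp: sums_iff)
  then have "(f has_field_derivative (\<Sum>k. F' k z)) (at z)"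
    by (rule has_field_derivative_transform_within_open[where S = unit_disc])
      (use z f_sums in \<open>auto simp: sums_iff\<close>)
  then have "deriv f z = (\<Sum>k. F' k z)" by (rule DERIV_imp_deriv)
  moreover have "summable (\<lambda>k. norm (F' k z))"
    using bound \<rho> by (intro summable_comparison_test[OF _ summable_bound]) auto
  ultimately show ?thesis using summable_norm by (fastforce simp: norm_F')
qed

definition tail_coeff :: "real \<Rightarrow> nat \<Rightarrow> real" where
  "tail_coeff h k = (if 1 < h * (real (n k))\<^sup>2 then (cmod (a k))\<^sup>2 else 0)"

definition tail_energy :: "real \<Rightarrow> real" where
  "tail_energy h = (\<Sum>k. tail_coeff h k)"

lemma tail_coeff_nonneg: "0 \<le> tail_coeff h k"
  by (simp add: tail_coeff_def)

lemma tail_coeff_le: "tail_coeff h k \<le> (cmod (a k))\<^sup>2"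
  by (simp add: tail_coeff_def)

lemma summable_tail_coeff: "summable (tail_coeff h)"
  using tail_coeff_nonneg tail_coeff_le
  by (intro summable_comparison_test[OF _ summable_norm_coeff_squared]) auto

lemma summable_tail_coeff_mult_power:
  assumes "0 \<le> r" "r < 1"
  shows "summable (\<lambda>k. tail_coeff h k * (real (n k) * r ^ (n k - 1)))"
proof (rule summable_comparison_test[OF _ summable_mult[OF lacunary_power_sum(1)[OF assms]]])
  have "tail_coeff h k \<le> coeff_norm_sum\<^sup>2" for k
    using tail_coeff_le[of h k] norm_coeff_le[of k] by (meson norm_ge_zero order_trans power_mono)
  then show "\<exists>N. \<forall>k\<ge>N. norm (tail_coeff h k * (real (n k) * r ^ (n k - 1)))
      \<le> coeff_norm_sum\<^sup>2 * (real (n k) * r ^ (n k - 1))"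
    using assms tail_coeff_nonneg by (auto intro!: mult_right_mono)
qed

lemma low_freq_sum_le:
  assumes "0 < h" "0 \<le> r" "r \<le> 1"
  shows "summable (\<lambda>k. if 1 < h * (real (n k))\<^sup>2 then 0 else cmod (a k) * (real (n k) * r ^ (n k - 1)))"
    and "(\<Sum>k. if 1 < h * (real (n k))\<^sup>2 then 0 else cmod (a k) * (real (n k) * r ^ (n k - 1)))
      \<le> coeff_norm_sum / sqrt h"
proof -
  have term_le: "(if 1 < h * (real (n k))\<^sup>2 then 0 else cmod (a k) * (real (n k) * r ^ (n k - 1)))
      \<le> cmod (a k) * (1 / sqrt h)" for k
  proof (cases "1 < h * (real (n k))\<^sup>2")
    case False
    then have "(real (n k))\<^sup>2 \<le> 1 / h" using assms by (simp add: field_simps)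
    then have "real (n k) \<le> sqrt (1 / h)" by (rule real_le_rsqrt)
    then have "real (n k) \<le> 1 / sqrt h" by (simp add: real_sqrt_divide)
    moreover have "real (n k) * r ^ (n k - 1) \<le> real (n k)"
      using assms by (simp add: mult_left_le power_le_one)
    ultimately have le: "real (n k) * r ^ (n k - 1) \<le> 1 / sqrt h" by linarith
    show ?thesis using False mult_left_mono[OF le norm_ge_zero[of "a k"]] by simp
  qed (use assms in simp)
  have nonneg: "0 \<le> (if 1 < h * (real (n k))\<^sup>2 then 0 else cmod (a k) * (real (n k) * r ^ (n k - 1)))" for k
    using assms by simp
  show "summable (\<lambda>k. if 1 < h * (real (n k))\<^sup>2 then 0 else cmod (a k) * (real (n k) * r ^ (n k - 1)))"
    using term_le nonneg
    by (intro summable_comparison_test[OF _ summable_mult2[OF summable_norm_coeff, of "1 / sqrt h"]]) auto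
  then show "(\<Sum>k. if 1 < h * (real (n k))\<^sup>2 then 0 else cmod (a k) * (real (n k) * r ^ (n k - 1)))
      \<le> coeff_norm_sum / sqrt h"
    using suminf_le[OF term_le _ summable_mult2[OF summable_norm_coeff, of "1 / sqrt h"]]
      suminf_divide[OF summable_norm_coeff, of "sqrt h"]
    by (simp add: coeff_norm_sum_def)
qed

text \<open>Cauchy--Schwarz against the lacunary sum \<open>\<Sum> n(k) r^(n(k) - 1) \<le> gap_const / (1 - r)\<close>.\<close>
lemma high_freq_sum_squared_le:
  assumes "0 \<le> r" "r < 1"
  shows "summable (\<lambda>k. if 1 < h * (real (n k))\<^sup>2 then cmod (a k) * (real (n k) * r ^ (n k - 1)) else 0)"
    and "(\<Sum>k. if 1 < h * (real (n k))\<^sup>2 then cmod (a k) * (real (n k) * r ^ (n k - 1)) else 0)\<^sup>2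
      \<le> (\<Sum>k. tail_coeff h k * (real (n k) * r ^ (n k - 1))) * (gap_const / (1 - r))"
proof -
  define x where "x = (\<lambda>k. real (n k) * r ^ (n k - 1))"
  define p where "p = (\<lambda>k. tail_coeff h k * x k)"
  have x: "0 \<le> x k" for k using assms by (simp add: x_def)
  have p: "0 \<le> p k" for k using x tail_coeff_nonneg by (simp add: p_def)
  have eq: "(\<lambda>k. if 1 < h * (real (n k))\<^sup>2 then cmod (a k) * x k else 0) = (\<lambda>k. sqrt (p k) * sqrt (x k))"
  proof
    fix k
    have "sqrt ((cmod (a k))\<^sup>2 * x k) * sqrt (x k) = cmod (a k) * x k"
      using x[of k] by (simp add: real_sqrt_mult mult.assoc)
    then show "(if 1 < h * (real (n k))\<^sup>2 then cmod (a k) * x k else 0) = sqrt (p k) * sqrt (x k)"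
      by (simp add: p_def tail_coeff_def)
  qed
  have sp: "summable p" unfolding p_def x_def by (rule summable_tail_coeff_mult_power[OF assms])
  have sx: "summable x" unfolding x_def by (rule lacunary_power_sum(1)[OF assms])
  have "summable (\<lambda>k. if 1 < h * (real (n k))\<^sup>2 then cmod (a k) * x k else 0)"
    unfolding eq by (rule Cauchy_Schwarz_suminf(1)[OF p sp x sx])
  then show "summable (\<lambda>k. if 1 < h * (real (n k))\<^sup>2 then cmod (a k) * (real (n k) * r ^ (n k - 1)) else 0)"
    unfolding x_def .
  have "(\<Sum>k. if 1 < h * (real (n k))\<^sup>2 then cmod (a k) * x k else 0)\<^sup>2 \<le> suminf p * suminf x"
    unfolding eq by (rule Cauchy_Schwarz_suminf(2)[OF p sp x sx])
  also have "\<dots> \<le> suminf p * (gap_const / (1 - r))"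
    using lacunary_power_sum(2)[OF assms] suminf_nonneg[OF sp p]
    by (intro mult_left_mono) (auto simp: x_def)
  finally show "(\<Sum>k. if 1 < h * (real (n k))\<^sup>2 then cmod (a k) * (real (n k) * r ^ (n k - 1)) else 0)\<^sup>2
      \<le> (\<Sum>k. tail_coeff h k * (real (n k) * r ^ (n k - 1))) * (gap_const / (1 - r))"
    unfolding p_def x_def .
qed

text \<open>The low frequencies are weighted by \<open>1 - |z|^2 \<le> 2h\<close>, the high ones by
  \<open>1 - |z|^2 \<le> 2 (1 - |z|)\<close>, which cancels the factor \<open>1 / (1 - |z|)\<close> from Cauchy--Schwarz.\<close>
lemma weighted_deriv_squared_le:
  assumes z: "z \<in> unit_disc" and h: "0 < h" "h \<le> 1" and zh: "1 - h \<le> cmod z"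
  shows "(1 - (cmod z)\<^sup>2) * (cmod (deriv f z))\<^sup>2
    \<le> 4 * coeff_norm_sum\<^sup>2 + 4 * gap_const * (\<Sum>k. tail_coeff h k * (real (n k) * cmod z ^ (n k - 1)))"
proof -
  define r where "r = cmod z"
  have r: "0 \<le> r" "r < 1" "1 - h \<le> r" using z zh by (auto simp: r_def)
  define H where "H = (\<Sum>k. if 1 < h * (real (n k))\<^sup>2 then 0 else cmod (a k) * (real (n k) * r ^ (n k - 1)))"
  define T where "T = (\<Sum>k. if 1 < h * (real (n k))\<^sup>2 then cmod (a k) * (real (n k) * r ^ (n k - 1)) else 0)"
  define P where "P = (\<Sum>k. tail_coeff h k * (real (n k) * r ^ (n k - 1)))"
  have "cmod (deriv f z) \<le> H + T"
    using norm_deriv_f_le[OF z]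
      suminf_add[OF low_freq_sum_le(1)[OF h(1) r(1) less_imp_le[OF r(2)]] high_freq_sum_squared_le(1)[OF r(1,2)]]
    by (simp add: H_def T_def r_def if_distrib cong: if_cong)
  then have "(cmod (deriv f z))\<^sup>2 \<le> (H + T)\<^sup>2" by (simp add: power_mono)
  also have "\<dots> \<le> 2 * H\<^sup>2 + 2 * T\<^sup>2"
    using sum_squares_ge_zero[of "H - T" 0] by (simp add: power2_eq_square algebra_simps)
  finally have deriv_sq: "(cmod (deriv f z))\<^sup>2 \<le> 2 * H\<^sup>2 + 2 * T\<^sup>2" .
  have "0 \<le> H" unfolding H_def
    using low_freq_sum_le(1)[OF h(1) r(1) less_imp_le[OF r(2)]] r by (intro suminf_nonneg) auto
  then have "H\<^sup>2 \<le> (coeff_norm_sum / sqrt h)\<^sup>2"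
    using low_freq_sum_le(2)[OF h(1) r(1) less_imp_le[OF r(2)]] by (simp add: H_def power_mono)
  then have H_sq: "H\<^sup>2 \<le> coeff_norm_sum\<^sup>2 / h" using h by (simp add: power_divide)
  have T_sq: "T\<^sup>2 \<le> P * (gap_const / (1 - r))"
    unfolding T_def P_def by (rule high_freq_sum_squared_le(2)[OF r(1,2)])
  have "1 - r\<^sup>2 = (1 - r) * (1 + r)" by (simp add: power2_eq_square algebra_simps)
  then have w_h: "1 - r\<^sup>2 \<le> 2 * h" and w_r: "1 - r\<^sup>2 \<le> 2 * (1 - r)" and w: "0 \<le> 1 - r\<^sup>2"
    using r mult_mono[of "1 - r" h "1 + r" 2] mult_left_mono[of "1 + r" 2 "1 - r"] by auto
  have "(1 - r\<^sup>2) * (cmod (deriv f z))\<^sup>2 \<le> (1 - r\<^sup>2) * (2 * H\<^sup>2) + (1 - r\<^sup>2) * (2 * T\<^sup>2)"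
    using mult_left_mono[OF deriv_sq w] by (simp only: distrib_left)
  also have "(1 - r\<^sup>2) * (2 * H\<^sup>2) \<le> (2 * h) * (2 * (coeff_norm_sum\<^sup>2 / h))"
    using w_h H_sq h by (intro mult_mono) auto
  also have "(1 - r\<^sup>2) * (2 * T\<^sup>2) \<le> (2 * (1 - r)) * (2 * (P * (gap_const / (1 - r))))"
    using w_r T_sq r by (intro mult_mono) auto
  also have "(2 * h) * (2 * (coeff_norm_sum\<^sup>2 / h)) = 4 * coeff_norm_sum\<^sup>2" using h by simp
  also have "(2 * (1 - r)) * (2 * (P * (gap_const / (1 - r)))) = 4 * gap_const * P"
    using r by (simp add: field_simps)
  finally show ?thesis by (simp add: P_def r_def)
qed

lemma carleson_integrand_le:
  assumes l: "0 < l" "l \<le> 2 * pi" and h: "h = l / (2 * pi)"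
  shows "ennreal ((1 - (cmod z)\<^sup>2) * (cmod (deriv f z))\<^sup>2 / pi) * indicator (carleson_box \<theta> l) z
    \<le> ennreal (4 * coeff_norm_sum\<^sup>2 / pi) * indicator (arc_neighbourhood \<theta> l h) z
      + (\<Sum>k. ennreal (4 * gap_const / pi * tail_coeff h k) * power_majorant \<theta> l (n k) z)"
proof (cases "z \<in> carleson_box \<theta> l")
  case True
  obtain t where z: "1 - h \<le> cmod z" "cmod z < 1"
    using carleson_box_polar[OF True l(2)] h by blast
  have h01: "0 < h" "h \<le> 1" unfolding h using l by (auto simp: divide_le_eq)
  have zU: "z \<in> arc_neighbourhood \<theta> l h"
    using carleson_box_subset_arc_neighbourhood[OF h01(1) l(2)] True z by blast
  define x where "x = (\<lambda>k. real (n k) * cmod z ^ (n k - 1))"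
  define w where "w = (\<lambda>k. 4 * gap_const / pi * tail_coeff h k)"
  have x: "0 \<le> x k" for k by (simp add: x_def)
  have w: "0 \<le> w k" for k using gap_const_ge_1 tail_coeff_nonneg by (simp add: w_def)
  have summable_tail: "summable (\<lambda>k. tail_coeff h k * x k)"
    unfolding x_def using z by (intro summable_tail_coeff_mult_power) auto
  have summable_wx: "summable (\<lambda>k. w k * x k)"
    using summable_mult[OF summable_tail, of "4 * gap_const / pi"] by (simp add: w_def mult.assoc)
  have "(1 - (cmod z)\<^sup>2) * (cmod (deriv f z))\<^sup>2 / pi
      \<le> (4 * coeff_norm_sum\<^sup>2 + 4 * gap_const * (\<Sum>k. tail_coeff h k * x k)) / pi"
    using weighted_deriv_squared_le[OF _ h01 z(1)] z by (intro divide_right_mono) (auto simp: x_def)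
  also have "\<dots> = 4 * coeff_norm_sum\<^sup>2 / pi + (\<Sum>k. w k * x k)"
    using suminf_mult[OF summable_tail, of "4 * gap_const / pi"] by (simp add: w_def add_divide_distrib mult.assoc)
  finally have "ennreal ((1 - (cmod z)\<^sup>2) * (cmod (deriv f z))\<^sup>2 / pi)
      \<le> ennreal (4 * coeff_norm_sum\<^sup>2 / pi + (\<Sum>k. w k * x k))"
    by (rule ennreal_leI)
  also have "\<dots> = ennreal (4 * coeff_norm_sum\<^sup>2 / pi) + (\<Sum>k. ennreal (w k) * ennreal (x k))"
    using suminf_nonneg[OF summable_wx] suminf_ennreal2[OF _ summable_wx] w x
    by (simp add: ennreal_plus ennreal_mult')
  also have "(\<Sum>k. ennreal (w k) * ennreal (x k)) \<le> (\<Sum>k. ennreal (w k) * power_majorant \<theta> l (n k) z)"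
    using power_le_power_majorant[OF _ True l] n_pos
    by (intro suminf_le mult_left_mono summableI) (auto simp: x_def Suc_le_eq)
  finally show ?thesis using True zU by (simp add: w_def)
qed simp

lemma carleson_integral_le:
  assumes l: "0 < l" "l \<le> 2 * pi"
  shows "(\<integral>\<^sup>+ z \<in> carleson_box \<theta> l. ennreal ((1 - (cmod z)\<^sup>2) * (cmod (deriv f z))\<^sup>2 / pi) \<partial>lborel)
    \<le> ennreal (32 * coeff_norm_sum\<^sup>2 * l * (l / (2 * pi)) + 640 * gap_const * l * tail_energy (l / (2 * pi)))"
proof -
  define h where "h = l / (2 * pi)"
  have h: "0 < h" "h \<le> l" using l pi_gt3 by (auto simp: h_def field_simps)
  define w where "w = (\<lambda>k. 4 * gap_const / pi * tail_coeff h k)"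
  have w: "0 \<le> w k" for k using gap_const_ge_1 tail_coeff_nonneg by (simp add: w_def)
  have "(\<integral>\<^sup>+ z \<in> carleson_box \<theta> l. ennreal ((1 - (cmod z)\<^sup>2) * (cmod (deriv f z))\<^sup>2 / pi) \<partial>lborel)
      \<le> (\<integral>\<^sup>+ z. ennreal (4 * coeff_norm_sum\<^sup>2 / pi) * indicator (arc_neighbourhood \<theta> l h) z
          + (\<Sum>k. ennreal (w k) * power_majorant \<theta> l (n k) z) \<partial>lborel)"
    using carleson_integrand_le[OF l h_def] by (intro nn_integral_mono) (simp add: w_def)
  also have "\<dots> \<le> ennreal (4 * coeff_norm_sum\<^sup>2 / pi * (8 * pi * l * h) + (\<Sum>k. w k) * (160 * pi * l))"
    using n_pos h l w unfolding w_def
    by (intro nn_integral_majorant_sum_le summable_mult summable_tail_coeff) (auto simp: Suc_le_eq)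
  also have "4 * coeff_norm_sum\<^sup>2 / pi * (8 * pi * l * h) + (\<Sum>k. w k) * (160 * pi * l)
      = 32 * coeff_norm_sum\<^sup>2 * l * h + 640 * gap_const * l * tail_energy h"
    using suminf_mult[OF summable_tail_coeff, of "4 * gap_const / pi"]
    by (simp add: w_def tail_energy_def)
  finally show ?thesis unfolding h_def .
qed

definition log_energy :: real where
  "log_energy = (\<Sum>k. (cmod (a k))\<^sup>2 * (1 + (ln (real (n k))) ^ 3))"

lemma summable_log_energy: "summable (\<lambda>k. (cmod (a k))\<^sup>2 * (1 + (ln (real (n k))) ^ 3))"
  using summable_add[OF summable_norm_coeff_squared log_cube_summable] by (simp add: algebra_simps)

lemma log_energy_nonneg: "0 \<le> log_energy"
  unfolding log_energy_def using summable_log_energy ln_n_nonneg by (intro suminf_nonneg) auto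

text \<open>Only frequencies with \<open>n(k)^2 > 1/h\<close> enter the tail, and for them
  \<open>1 - ln h < 1 + 2 ln n(k)\<close>.\<close>
lemma tail_energy_le:
  assumes "0 < h" "h \<le> 1"
  shows "tail_energy h \<le> 9 * log_energy / (1 - ln h)\<^sup>2"
proof -
  have ln_h: "ln h \<le> 0" using assms by simp
  then have pos: "0 < (1 - ln h)\<^sup>2" by (intro zero_less_power) linarith
  have coeff_le: "tail_coeff h k \<le> 9 * ((cmod (a k))\<^sup>2 * (1 + (ln (real (n k))) ^ 3)) / (1 - ln h)\<^sup>2" for k
  proof (cases "1 < h * (real (n k))\<^sup>2")
    case True
    have "0 < ln (h * (real (n k))\<^sup>2)" using True by simp
    then have "- ln h < 2 * ln (real (n k))" using assms n_pos[of k] by (simp add: ln_mult ln_realpow)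
    then have "(1 - ln h)\<^sup>2 \<le> (1 + 2 * ln (real (n k)))\<^sup>2"
      using ln_h by (intro power_mono) linarith+
    also have "\<dots> \<le> 9 * (1 + (ln (real (n k))) ^ 3)"
      by (rule one_plus_two_mult_squared_le[OF ln_n_nonneg])
    finally have "(cmod (a k))\<^sup>2 * (1 - ln h)\<^sup>2 \<le> (cmod (a k))\<^sup>2 * (9 * (1 + (ln (real (n k))) ^ 3))"
      by (rule mult_left_mono) simp
    then show ?thesis using True pos by (simp add: tail_coeff_def le_divide_eq algebra_simps)
  next
    case False
    then show ?thesis using ln_n_nonneg[of k] by (simp add: tail_coeff_def)
  qed
  have "tail_energy h \<le> (\<Sum>k. 9 * ((cmod (a k))\<^sup>2 * (1 + (ln (real (n k))) ^ 3)) / (1 - ln h)\<^sup>2)"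
    unfolding tail_energy_def
    using summable_divide[OF summable_mult[OF summable_log_energy]]
    by (intro suminf_le[OF coeff_le summable_tail_coeff])
  also have "\<dots> = 9 * log_energy / (1 - ln h)\<^sup>2"
    unfolding log_energy_def using summable_log_energy by (simp add: suminf_divide suminf_mult summable_mult)
  finally show ?thesis .
qed

definition carleson_const :: real where
  "carleson_const = 4 * (128 * coeff_norm_sum\<^sup>2 + 5760 * gap_const * log_energy) + 1"

lemma carleson_const_pos: "0 < carleson_const"
  using gap_const_ge_1 log_energy_nonneg by (simp add: carleson_const_def add_nonneg_pos)

lemma carleson_bound_le_log:
  assumes l: "0 < l" "l \<le> 2 * pi" "l \<noteq> 2"
  shows "32 * coeff_norm_sum\<^sup>2 * l * (l / (2 * pi)) + 640 * gap_const * l * tail_energy (l / (2 * pi))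
    \<le> carleson_const * l / (ln (2 / l))\<^sup>2"
proof -
  define h where "h = l / (2 * pi)"
  define D where "D = 128 * coeff_norm_sum\<^sup>2 + 5760 * gap_const * log_energy"
  have h: "0 < h" "h \<le> 1" using l by (auto simp: h_def divide_le_eq)
  have "ln h \<le> 0" using h by simp
  then have pos: "0 < (1 - ln h)\<^sup>2" by (intro zero_less_power) linarith
  have "32 * coeff_norm_sum\<^sup>2 * l * h + 640 * gap_const * l * tail_energy h
      \<le> 32 * coeff_norm_sum\<^sup>2 * l * (4 / (1 - ln h)\<^sup>2) + 640 * gap_const * l * (9 * log_energy / (1 - ln h)\<^sup>2)"
  proof (rule add_mono)
    show "32 * coeff_norm_sum\<^sup>2 * l * h \<le> 32 * coeff_norm_sum\<^sup>2 * l * (4 / (1 - ln h)\<^sup>2)"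
      using mult_one_minus_ln_squared_le[OF h] pos l by (intro mult_left_mono) (auto simp: field_simps)
    show "640 * gap_const * l * tail_energy h \<le> 640 * gap_const * l * (9 * log_energy / (1 - ln h)\<^sup>2)"
      using tail_energy_le[OF h] l gap_const_ge_1 by (intro mult_left_mono) auto
  qed
  also have "\<dots> = l * D / (1 - ln h)\<^sup>2"
    by (simp add: D_def add_divide_distrib algebra_simps)
  also have "\<dots> = l * D * 4 / (4 * (1 - ln h)\<^sup>2)" by simp
  also have "\<dots> \<le> l * D * 4 / (ln (2 / l))\<^sup>2"
  proof (rule divide_left_mono)
    have "ln (2 / l) \<noteq> 0" using l by (simp add: field_simps)
    then show "0 < 4 * (1 - ln h)\<^sup>2 * (ln (2 / l))\<^sup>2" using pos by simp
    show "0 \<le> l * D * 4" using l gap_const_ge_1 log_energy_nonneg by (simp add: D_def)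
    show "(ln (2 / l))\<^sup>2 \<le> 4 * (1 - ln h)\<^sup>2"
      unfolding h_def by (rule ln_two_div_squared_le[OF l(1,2)])
  qed
  also have "\<dots> \<le> carleson_const * l / (ln (2 / l))\<^sup>2"
    using l by (intro divide_right_mono) (auto simp: carleson_const_def D_def algebra_simps)
  finally show ?thesis unfolding h_def .
qed

lemma f_in_BMOA_log: "f \<in> BMOA_log"
  unfolding BMOA_log_def
proof (intro CollectI conjI exI[of _ carleson_const] allI impI f_in_H1 carleson_const_pos)
  fix \<theta> l :: real assume "0 < l \<and> l \<le> 2 * pi \<and> l \<noteq> 2"
  then have l: "0 < l" "l \<le> 2 * pi" "l \<noteq> 2" by auto
  show "(\<integral>\<^sup>+ z \<in> carleson_box \<theta> l. ennreal ((1 - (cmod z)\<^sup>2) * (cmod (deriv f z))\<^sup>2 / pi) \<partial>lborel)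
      \<le> ennreal (carleson_const * l / (ln (2 / l))\<^sup>2)"
    using carleson_integral_le[OF l(1,2)] ennreal_leI[OF carleson_bound_le_log[OF l]]
    by (rule order_trans)
qed

end

theorem mainTheorem11:
  fixes a :: "nat \<Rightarrow> complex" and n :: "nat \<Rightarrow> nat"
    and f :: "complex \<Rightarrow> complex" and lam :: real
  assumes "\<And>k. n k > 0"
    and "lam > 1"
    and "\<And>k. real (n (Suc k)) \<ge> lam * real (n k)"
    and "f holomorphic_on unit_disc"
    and "\<And>z. z \<in> unit_disc \<Longrightarrow> (\<lambda>k. a k * z ^ n k) sums f z"
    and "summable (\<lambda>k. (cmod (a k))\<^sup>2 * (ln (real (n k))) ^ 3)"
  shows "f \<in> BMOA_log \<inter> Hinf"
proof -
  interpret lacunary_series n lam a f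
    by unfold_locales (use assms in auto)
  show ?thesis using f_in_BMOA_log f_in_Hinf by simp
qed

end
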